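(* Let $\mathcal{G}=(\mathcal{V},\mathcal{E})$ be a directed graph with terminals $s,t$ and $f:2^{\mathcal{E}}\to\mathbb{R}_+$ normalized, monotone nondecreasing and submodular. Then minimum $(s,t)$-cut with cost function $\hat f_{\mathrm{pf}}$ is dual to the polymatroidal network flow with capacities $\mathrm{cap}^{\mathrm{in}}_v=f|_{\delta^-(v)}$ and $\mathrm{cap}^{\mathrm{out}}_v=f|_{\delta^+(v)}$ at each node $v\in\mathcal{V}$; that is, the minimum of $\hat f_{\mathrm{pf}}(C)$ over $(s,t)$-cuts $C$ equals the maximum value of a polymatroidal $(s,t)$-flow with these capacities.
   Context: An $(s,t)$-cut is a set of edges whose removal disconnects all $s$-$t$ paths. For $C\subseteq\mathcal{E}$, let $\mathcal{P}_C$ be the family of all partitions $\Pi(C)=\{C^\Pi_v\}_{v\in\mathcal{V}}$ of $C$ obtained by assigning each edge $(u,w)\in C$ either to its tail $u$ or to its head $w$ ($C^\Pi_v$ is the set of edges assigned to $v$, possibly empty), and define $\hat f_{\mathrm{pf}}(C)=\min_{\Pi(C)\in\mathcal{P}_C}\sum_{v\in\mathcal{V}} f(C^\Pi_v)$. A polymatroidal $(s,t)$-flow is $\varphi:\mathcal{E}\to\mathbb{R}_+$ such that inflow equals outflow at every $v\notin\{s,t\}$ and, for every node $v$, $\sum_{e\in A}\varphi(e)\le \mathrm{cap}^{\mathrm{in}}_v(A)$ for all $A\subseteq\delta^-(v)$ (edges entering $v$) and $\sum_{e\in A}\varphi(e)\le \mathrm{cap}^{\mathrm{out}}_v(A)$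 for all $A\subseteq\delta^+(v)$ (edges leaving $v$); its value is the net outflow at $s$. $f|_A$ denotes the restriction of $f$ to subsets of $A$. *)

theory Defs
  imports Complex_Main
begin

definition in_edges :: "('v \<times> 'v) set \<Rightarrow> 'v \<Rightarrow> ('v \<times> 'v) set" where
  "in_edges E v = {e \<in> E. snd e = v}"

definition out_edges :: "('v \<times> 'v) set \<Rightarrow> 'v \<Rightarrow> ('v \<times> 'v) set" where
  "out_edges E v = {e \<in> E. fst e = v}"

definition is_st_cut :: "('v \<times> 'v) set \<Rightarrow> 'v \<Rightarrow> 'v \<Rightarrow> ('v \<times> 'v) set \<Rightarrow> bool" where
  "is_st_cut E s t C \<longleftrightarrow> C \<subseteq> E \<and> (s, t) \<notin> (E - C)\<^sup>*"

(* partition of C induced by assigning each edge to its tail or head: the assignment sigma *)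
definition edge_assignment :: "('v \<times> 'v) set \<Rightarrow> (('v \<times> 'v) \<Rightarrow> 'v) \<Rightarrow> bool" where
  "edge_assignment C \<sigma> \<longleftrightarrow> (\<forall>e\<in>C. \<sigma> e = fst e \<or> \<sigma> e = snd e)"

definition f_pf :: "(('v \<times> 'v) set \<Rightarrow> real) \<Rightarrow> 'v set \<Rightarrow> ('v \<times> 'v) set \<Rightarrow> real" where
  "f_pf f V C = Min {(\<Sum>v\<in>V. f {e \<in> C. \<sigma> e = v}) | \<sigma>. edge_assignment C \<sigma>}"

definition is_polymatroidal_flow ::
  "'v set \<Rightarrow> ('v \<times> 'v) set \<Rightarrow> (('v \<times> 'v) set \<Rightarrow> real) \<Rightarrow> 'v \<Rightarrow> 'v \<Rightarrow> (('v \<times> 'v) \<Rightarrow> real) \<Rightarrow> bool" where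
  "is_polymatroidal_flow V E f s t \<phi> \<longleftrightarrow>
     (\<forall>e\<in>E. \<phi> e \<ge> 0) \<and>
     (\<forall>v\<in>V - {s, t}. (\<Sum>e\<in>in_edges E v. \<phi> e) = (\<Sum>e\<in>out_edges E v. \<phi> e)) \<and>
     (\<forall>v\<in>V. \<forall>A. A \<subseteq> in_edges E v \<longrightarrow> (\<Sum>e\<in>A. \<phi> e) \<le> f A) \<and>
     (\<forall>v\<in>V. \<forall>A. A \<subseteq> out_edges E v \<longrightarrow> (\<Sum>e\<in>A. \<phi> e) \<le> f A)"

definition flow_value :: "('v \<times> 'v) set \<Rightarrow> 'v \<Rightarrow> (('v \<times> 'v) \<Rightarrow> real) \<Rightarrow> real" where
  "flow_value E s \<phi> = (\<Sum>e\<in>out_edges E s. \<phi> e) - (\<Sum>e\<in>in_edges E s. \<phi> e)"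

end

theory Submission
  imports Defs "HOL-Analysis.Analysis"
begin

text \<open>
  Weak duality: the edges leaving the source side of a cut carry at least the flow value, and
  charging each of them to the endpoint chosen by an optimal partition of the cut bounds their
  flow by the polymatroidal capacities. For the converse take a maximum flow (it exists by
  compactness) and search for augmenting walks in an exchange graph: an arc raises or lowers the
  flow on one edge, and consecutive arcs meeting at a vertex are allowed when the combined change
  stays in the tangent cone of the polymatroid there, i.e. the raised edge lies in no tight set,
  or every tight set containing it also contains the lowered edge, which carries positive flow.
  If the sink were reachable, the sum of the arc vectors along such a walk would be a feasible
  improving direction. Otherwise the reachable vertices form the source side of a cut whose
  edges split into tight sets: at a head, the smallest tight sets forced by reachable forward
  arcs; at a tail, the remaining edges, which are closed under taking smallest tight sets. Hence
  the cost of the cut equals the flow value.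
\<close>

lemma closedin_Collect_ball:
  assumes "\<And>i. i \<in> I \<Longrightarrow> closedin X {x \<in> topspace X. P i x}"
  shows "closedin X {x \<in> topspace X. \<forall>i\<in>I. P i x}"
proof (cases "I = {}")
  case False
  then have "{x \<in> topspace X. \<forall>i\<in>I. P i x} = (\<Inter>i\<in>I. {x \<in> topspace X. P i x})"
    by auto
  then show ?thesis
    using False assms by auto
qed simp

lemma continuous_map_sum_coordinates:
  assumes "A \<subseteq> I" "finite A"
  shows "continuous_map (product_topology (\<lambda>_. euclideanreal) I) euclideanreal (\<lambda>x. sum x A)"
  using assms by (intro continuous_map_sum continuous_map_product_projection) auto

lemma eventually_step_le:
  fixes a b c :: real
  assumes "a \<le> c" "a = c \<Longrightarrow> b \<le> 0"
  shows "\<forall>\<^sub>F \<epsilon> in at_right 0. a + \<epsilon> * b \<le> c"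
proof (cases "a = c")
  case True
  then show ?thesis
    using assms(2) eventually_at_right_less[of 0]
    by (auto elim!: eventually_mono simp: mult_nonneg_nonpos)
next
  case False
  have "((\<lambda>\<epsilon>. a + \<epsilon> * b) \<longlongrightarrow> a + 0 * b) (at_right 0)"
    by (intro tendsto_intros)
  then have "\<forall>\<^sub>F \<epsilon> in at_right 0. a + \<epsilon> * b < c"
    using False assms(1) by (intro order_tendstoD) auto
  then show ?thesis
    by (auto elim: eventually_mono)
qed

datatype edge_end = Head | Tail

lemma UNIV_edge_end: "UNIV = {Head, Tail}"
  using edge_end.exhaust by auto

lemma all_edge_end: "(\<forall>h. P h) \<longleftrightarrow> P Head \<and> P Tail"
  by (metis edge_end.exhaust)

fun endpoint :: "edge_end \<Rightarrow> 'v \<times> 'v \<Rightarrow> 'v" where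
  "endpoint Head e = snd e"
| "endpoint Tail e = fst e"

fun opposite :: "edge_end \<Rightarrow> edge_end" where
  "opposite Head = Tail"
| "opposite Tail = Head"

definition edges_at :: "('v \<times> 'v) set \<Rightarrow> 'v \<Rightarrow> edge_end \<Rightarrow> ('v \<times> 'v) set" where
  "edges_at E v h = {e \<in> E. endpoint h e = v}"

lemma in_edges_eq_edges_at: "in_edges E v = edges_at E v Head"
  by (simp add: in_edges_def edges_at_def)

lemma out_edges_eq_edges_at: "out_edges E v = edges_at E v Tail"
  by (simp add: out_edges_def edges_at_def)

lemma edges_at_subset: "edges_at E v h \<subseteq> E"
  by (simp add: edges_at_def)

definition excess :: "('v \<times> 'v) set \<Rightarrow> (('v \<times> 'v) \<Rightarrow> real) \<Rightarrow> 'v \<Rightarrow> real" where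
  "excess E g v = sum g (in_edges E v) - sum g (out_edges E v)"

lemma excess_add: "excess E (\<lambda>x. g x + g' x) v = excess E g v + excess E g' v"
  by (simp add: excess_def sum.distrib)

lemma excess_add_scaled: "excess E (\<lambda>x. g x + c * d x) v = excess E g v + c * excess E d v"
  by (simp add: excess_def sum.distrib sum_distrib_left algebra_simps)

lemma flow_value_add_scaled:
  "flow_value E s (\<lambda>x. g x + c * d x) = flow_value E s g - c * excess E d s"
  by (simp add: flow_value_def excess_def sum.distrib sum_distrib_left algebra_simps)

lemma is_polymatroidal_flow_iff:
  "is_polymatroidal_flow V E f s t \<phi> \<longleftrightarrow>
     (\<forall>e\<in>E. 0 \<le> \<phi> e) \<and> (\<forall>v\<in>V - {s, t}. excess E \<phi> v = 0) \<and>
     (\<forall>v\<in>V. \<forall>h. \<forall>A\<subseteq>edges_at E v h. sum \<phi> A \<le> f A)"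
  unfolding is_polymatroidal_flow_def excess_def all_edge_end
    in_edges_eq_edges_at out_edges_eq_edges_at by auto

lemma is_polymatroidal_flow_cong:
  assumes "\<And>e. e \<in> E \<Longrightarrow> \<phi> e = \<psi> e"
  shows "is_polymatroidal_flow V E f s t \<phi> \<longleftrightarrow> is_polymatroidal_flow V E f s t \<psi>"
    and "flow_value E s \<phi> = flow_value E s \<psi>"
proof -
  have sum_eq: "sum \<phi> A = sum \<psi> A" if "A \<subseteq> E" for A
    using assms that by (intro sum.cong refl) blast
  show "is_polymatroidal_flow V E f s t \<phi> \<longleftrightarrow> is_polymatroidal_flow V E f s t \<psi>"
    unfolding is_polymatroidal_flow_def using assms sum_eq
    by (simp add: in_edges_def out_edges_def subset_iff)
  show "flow_value E s \<phi> = flow_value E s \<psi>"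
    unfolding flow_value_def using sum_eq by (simp add: in_edges_def out_edges_def)
qed

fun orientation :: "edge_end \<Rightarrow> real" where
  "orientation Head = 1"
| "orientation Tail = -1"

definition arc_vector :: "'v \<times> 'v \<Rightarrow> edge_end \<Rightarrow> ('v \<times> 'v) \<Rightarrow> real" where
  "arc_vector e h x = (if x = e then orientation h else 0)"

lemma arc_vector_eq_0:
  assumes "x \<in> edges_at E w h'" "endpoint h' e \<noteq> w"
  shows "arc_vector e h x = 0"
  using assms by (auto simp: arc_vector_def edges_at_def)

lemma finite_assignment_costs:
  assumes "finite C"
  shows "finite {(\<Sum>v\<in>V. f {e \<in> C. \<sigma> e = v}) | \<sigma>. edge_assignment C \<sigma>}"
proof -
  let ?cost = "\<lambda>\<sigma>. \<Sum>v\<in>V. f {e \<in> C. \<sigma> e = v}"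
  have "{?cost \<sigma> | \<sigma>. edge_assignment C \<sigma>} \<subseteq> ?cost ` PiE C (\<lambda>e. {fst e, snd e})"
  proof clarify
    fix \<sigma> assume "edge_assignment C \<sigma>"
    then have "restrict \<sigma> C \<in> PiE C (\<lambda>e. {fst e, snd e})"
      by (auto simp: edge_assignment_def)
    moreover have "?cost \<sigma> = ?cost (restrict \<sigma> C)"
      by (intro sum.cong arg_cong[where f = f]) auto
    ultimately show "?cost \<sigma> \<in> ?cost ` PiE C (\<lambda>e. {fst e, snd e})"
      by blast
  qed
  then show ?thesis
    by (rule finite_subset) (use assms in \<open>simp add: finite_PiE\<close>)
qed

lemma f_pf_le_cost:
  assumes "finite C" "edge_assignment C \<sigma>"
  shows "f_pf f V C \<le> (\<Sum>v\<in>V. f {e \<in> C. \<sigma> e = v})"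
  unfolding f_pf_def using finite_assignment_costs[OF assms(1)] assms(2)
  by (intro Min_le) auto

lemma f_pf_attained:
  assumes "finite C"
  obtains \<sigma> where "edge_assignment C \<sigma>" "f_pf f V C = (\<Sum>v\<in>V. f {e \<in> C. \<sigma> e = v})"
proof -
  have "edge_assignment C fst"
    by (simp add: edge_assignment_def)
  then have "f_pf f V C \<in> {(\<Sum>v\<in>V. f {e \<in> C. \<sigma> e = v}) | \<sigma>. edge_assignment C \<sigma>}"
    unfolding f_pf_def using finite_assignment_costs[OF assms] by (intro Min_in) auto
  then show thesis
    using that by blast
qed

section \<open>Flows across vertex sets\<close>

locale st_graph =
  fixes V :: "'v set" and E :: "('v \<times> 'v) set" and s t :: 'v
  assumes finite_vertices: "finite V" and edges_subset: "E \<subseteq> V \<times> V"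
    and source_vertex: "s \<in> V" and sink_vertex: "t \<in> V" and source_ne_sink: "s \<noteq> t"
begin

lemma finite_edges: "finite E"
  using finite_vertices edges_subset by (meson finite_SigmaI finite_subset)

lemma finite_edges_subset: "A \<subseteq> E \<Longrightarrow> finite A"
  using finite_edges by (rule rev_finite_subset)

lemma edge_endpoints: "e \<in> E \<Longrightarrow> endpoint h e \<in> V"
  using edges_subset by (cases h) auto

definition leaving :: "'v set \<Rightarrow> ('v \<times> 'v) set" where
  "leaving S = {e \<in> E. fst e \<in> S \<and> snd e \<notin> S}"

definition entering :: "'v set \<Rightarrow> ('v \<times> 'v) set" where
  "entering S = {e \<in> E. fst e \<notin> S \<and> snd e \<in> S}"

lemma excess_arc_vector:
  assumes "e \<in> E"
  shows "excess E (arc_vector e h) w =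
    of_bool (w = endpoint h e) - of_bool (w = endpoint (opposite h) e)"
proof -
  have "sum (arc_vector e h) A = (if e \<in> A then orientation h else 0)" if "A \<subseteq> E" for A
    using finite_edges_subset[OF that] by (simp add: arc_vector_def)
  then show ?thesis
    using assms by (cases h) (auto simp: excess_def in_edges_def out_edges_def)
qed

lemma sum_by_assignment:
  assumes "D \<subseteq> E" "edge_assignment D \<sigma>"
  shows "sum g D = (\<Sum>v\<in>V. sum g {e \<in> D. \<sigma> e = v})"
proof -
  have "\<sigma> ` D \<subseteq> V"
    using assms edges_subset unfolding edge_assignment_def by force
  then show ?thesis
    using sum.group[of D V \<sigma> g] finite_edges_subset[OF assms(1)] finite_vertices
    by simp
qed

lemma sum_edges_at:
  assumes "S \<subseteq> V"
  shows "(\<Sum>v\<in>S. sum g (edges_at E v h)) = sum g {e \<in> E. endpoint h e \<in> S}"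
proof -
  have "endpoint h ` {e \<in> E. endpoint h e \<in> S} \<subseteq> S"
    by auto
  then have "(\<Sum>v\<in>S. sum g {e \<in> {e \<in> E. endpoint h e \<in> S}. endpoint h e = v}) =
      sum g {e \<in> E. endpoint h e \<in> S}"
    using finite_edges assms finite_vertices by (intro sum.group) (auto intro: finite_subset)
  moreover have "{e \<in> {e \<in> E. endpoint h e \<in> S}. endpoint h e = v} = edges_at E v h"
    if "v \<in> S" for v
    using that by (auto simp: edges_at_def)
  ultimately show ?thesis
    by simp
qed

lemma sum_excess_eq:
  assumes "S \<subseteq> V"
  shows "(\<Sum>v\<in>S. excess E g v) = sum g (entering S) - sum g (leaving S)"
proof -
  let ?inner = "{e \<in> E. fst e \<in> S \<and> snd e \<in> S}"
  have fin: "finite ?inner" "finite (entering S)" "finite (leaving S)"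
    by (auto simp: entering_def leaving_def intro: finite_edges_subset)
  have disj: "?inner \<inter> entering S = {}" "?inner \<inter> leaving S = {}"
    by (auto simp: entering_def leaving_def)
  have "{e \<in> E. endpoint Head e \<in> S} = ?inner \<union> entering S"
    by (auto simp: entering_def)
  then have "(\<Sum>v\<in>S. sum g (in_edges E v)) = sum g ?inner + sum g (entering S)"
    using sum_edges_at[OF assms, of g Head] sum.union_disjoint[OF fin(1,2) disj(1)]
    by (simp add: in_edges_eq_edges_at entering_def)
  moreover have "{e \<in> E. endpoint Tail e \<in> S} = ?inner \<union> leaving S"
    by (auto simp: leaving_def)
  then have "(\<Sum>v\<in>S. sum g (out_edges E v)) = sum g ?inner + sum g (leaving S)"
    using sum_edges_at[OF assms, of g Tail] sum.union_disjoint[OF fin(1,3) disj(2)]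
    by (simp add: out_edges_eq_edges_at leaving_def)
  ultimately show ?thesis
    by (simp add: excess_def sum_subtractf)
qed

lemma flow_value_eq_net_leaving:
  assumes conservation: "\<forall>v\<in>V - {s, t}. excess E g v = 0"
    and "S \<subseteq> V" "s \<in> S" "t \<notin> S"
  shows "flow_value E s g = sum g (leaving S) - sum g (entering S)"
proof -
  have "finite S"
    using assms(2) finite_vertices by (rule finite_subset)
  then have "(\<Sum>v\<in>S. excess E g v) = excess E g s + (\<Sum>v\<in>S - {s}. excess E g v)"
    using assms(3) by (rule sum.remove)
  also have "(\<Sum>v\<in>S - {s}. excess E g v) = 0"
    using assms by (intro sum.neutral) auto
  finally show ?thesis
    using sum_excess_eq[OF assms(2)] by (simp add: flow_value_def excess_def)
qed

lemma leaving_is_st_cut: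
  assumes "s \<in> S" "t \<notin> S"
  shows "is_st_cut E s t (leaving S)"
proof -
  have "v \<in> S" if "(s, v) \<in> (E - leaving S)\<^sup>*" for v
    using that
  proof (induction rule: rtrancl_induct)
    case (step u w)
    then show ?case
      by (auto simp: leaving_def)
  qed (use assms in simp)
  moreover have "leaving S \<subseteq> E"
    by (auto simp: leaving_def)
  ultimately show ?thesis
    using assms(2) unfolding is_st_cut_def by blast
qed

lemma st_cut_source_side:
  assumes "is_st_cut E s t C"
  obtains S where "S \<subseteq> V" "s \<in> S" "t \<notin> S" "leaving S \<subseteq> C"
proof
  let ?S = "{v. (s, v) \<in> (E - C)\<^sup>*}"
  show "?S \<subseteq> V"
  proof
    fix v assume "v \<in> ?S"
    then have "(s, v) \<in> (E - C)\<^sup>*" by simp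
    then show "v \<in> V"
      by (cases rule: rtranclE) (use source_vertex edges_subset in auto)
  qed
  show "s \<in> ?S" "t \<notin> ?S"
    using assms by (auto simp: is_st_cut_def)
  show "leaving ?S \<subseteq> C"
  proof
    fix e assume "e \<in> leaving ?S"
    then have "e \<in> E" "(s, fst e) \<in> (E - C)\<^sup>*" "(s, snd e) \<notin> (E - C)\<^sup>*"
      by (auto simp: leaving_def)
    then show "e \<in> C"
      using rtrancl_into_rtrancl[of s "fst e" "E - C" "snd e"] by auto
  qed
qed

end

section \<open>Weak duality and maximum flows\<close>

locale polymatroidal_network = st_graph V E s t
  for V :: "'v set" and E :: "('v \<times> 'v) set" and s t :: 'v +
  fixes f :: "('v \<times> 'v) set \<Rightarrow> real"
  assumes nonneg: "\<And>A. A \<subseteq> E \<Longrightarrow> f A \<ge> 0"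
    and normalized: "f {} = 0"
    and mono: "\<And>A B. A \<subseteq> B \<Longrightarrow> B \<subseteq> E \<Longrightarrow> f A \<le> f B"
    and submod: "\<And>A B. A \<subseteq> E \<Longrightarrow> B \<subseteq> E \<Longrightarrow> f (A \<union> B) + f (A \<inter> B) \<le> f A + f B"
begin

abbreviation flow :: "(('v \<times> 'v) \<Rightarrow> real) \<Rightarrow> bool" where
  "flow \<equiv> is_polymatroidal_flow V E f s t"

lemma flow_nonneg: "flow \<phi> \<Longrightarrow> e \<in> E \<Longrightarrow> 0 \<le> \<phi> e"
  by (simp add: is_polymatroidal_flow_iff)

lemma flow_conservation: "flow \<phi> \<Longrightarrow> \<forall>v\<in>V - {s, t}. excess E \<phi> v = 0"
  by (simp add: is_polymatroidal_flow_iff)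

lemma flow_capacity: "flow \<phi> \<Longrightarrow> v \<in> V \<Longrightarrow> A \<subseteq> edges_at E v h \<Longrightarrow> sum \<phi> A \<le> f A"
  by (simp add: is_polymatroidal_flow_iff)

lemma sum_leaving_le_assignment_cost:
  assumes "flow \<psi>" "leaving S \<subseteq> C" "C \<subseteq> E" "edge_assignment C \<sigma>"
  shows "sum \<psi> (leaving S) \<le> (\<Sum>v\<in>V. f {e \<in> C. \<sigma> e = v})"
proof -
  have \<sigma>: "edge_assignment (leaving S) \<sigma>"
    using assms(2,4) by (auto simp: edge_assignment_def)
  have "sum \<psi> (leaving S) = (\<Sum>v\<in>V. sum \<psi> {e \<in> leaving S. \<sigma> e = v})"
    by (rule sum_by_assignment[OF _ \<sigma>]) (auto simp: leaving_def)
  also have "\<dots> \<le> (\<Sum>v\<in>V. f {e \<in> C. \<sigma> e = v})"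
  proof (rule sum_mono)
    fix v assume "v \<in> V"
    have "{e \<in> leaving S. \<sigma> e = v} \<subseteq> edges_at E v (if v \<in> S then Tail else Head)"
    proof clarify
      fix e assume "e \<in> leaving S" "v = \<sigma> e"
      moreover have "\<sigma> e = fst e \<or> \<sigma> e = snd e"
        using \<sigma> \<open>e \<in> leaving S\<close> by (simp add: edge_assignment_def)
      ultimately show "e \<in> edges_at E (\<sigma> e) (if \<sigma> e \<in> S then Tail else Head)"
        by (auto simp: leaving_def edges_at_def)
    qed
    then have "sum \<psi> {e \<in> leaving S. \<sigma> e = v} \<le> f {e \<in> leaving S. \<sigma> e = v}"
      using flow_capacity[OF assms(1) \<open>v \<in> V\<close>] by blast
    also have "\<dots> \<le> f {e \<in> C. \<sigma> e = v}"
      using assms(2,3) by (intro mono) auto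
    finally show "sum \<psi> {e \<in> leaving S. \<sigma> e = v} \<le> f {e \<in> C. \<sigma> e = v}" .
  qed
  finally show ?thesis .
qed

theorem weak_duality:
  assumes "flow \<psi>" "is_st_cut E s t C"
  shows "flow_value E s \<psi> \<le> f_pf f V C"
proof -
  have "C \<subseteq> E"
    using assms(2) by (simp add: is_st_cut_def)
  obtain \<sigma> where \<sigma>: "edge_assignment C \<sigma>" and cost: "f_pf f V C = (\<Sum>v\<in>V. f {e \<in> C. \<sigma> e = v})"
    using f_pf_attained finite_edges_subset[OF \<open>C \<subseteq> E\<close>] by blast
  obtain S where S: "S \<subseteq> V" "s \<in> S" "t \<notin> S" and "leaving S \<subseteq> C"
    using st_cut_source_side[OF assms(2)] by blast
  have "0 \<le> sum \<psi> (entering S)"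
    using flow_nonneg[OF assms(1)] by (intro sum_nonneg) (simp add: entering_def)
  then have "flow_value E s \<psi> \<le> sum \<psi> (leaving S)"
    using flow_value_eq_net_leaving[OF flow_conservation[OF assms(1)] S] by simp
  also have "\<dots> \<le> f_pf f V C"
    using sum_leaving_le_assignment_cost[OF assms(1) \<open>leaving S \<subseteq> C\<close> \<open>C \<subseteq> E\<close> \<sigma>] cost by simp
  finally show ?thesis .
qed

lemma flow_le_singleton_capacity:
  assumes "flow \<psi>" "e \<in> E"
  shows "\<psi> e \<le> f {e}"
proof -
  have head: "snd e \<in> V" and "{e} \<subseteq> edges_at E (snd e) Head"
    using edge_endpoints[OF assms(2), of Head] assms(2) by (simp_all add: edges_at_def)
  then show ?thesis
    using flow_capacity[OF assms(1) head, of "{e}" Head] by simp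
qed

lemma compactin_bounded_flows:
  "compactin (product_topology (\<lambda>_. euclideanreal) E) {\<psi> \<in> PiE E (\<lambda>e. {0..f {e}}). flow \<psi>}"
proof -
  let ?X = "product_topology (\<lambda>_. euclideanreal) E"
  let ?box = "PiE E (\<lambda>e. {0..f {e}})"
  let ?conservation = "{\<psi> \<in> topspace ?X. \<forall>v\<in>V - {s, t}. excess E \<psi> v \<in> {0}}"
  let ?capacity = "{\<psi> \<in> topspace ?X. \<forall>v\<in>V. \<forall>h\<in>UNIV. \<forall>A\<in>Pow (edges_at E v h). sum \<psi> A \<in> {..f A}}"
  have sum_continuous: "continuous_map ?X euclideanreal (\<lambda>\<psi>. sum \<psi> A)" if "A \<subseteq> E" for A
    using continuous_map_sum_coordinates[OF that finite_edges_subset[OF that]] .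
  have excess_continuous: "continuous_map ?X euclideanreal (\<lambda>\<psi>. excess E \<psi> v)" for v
    unfolding excess_def in_edges_eq_edges_at out_edges_eq_edges_at
    by (intro continuous_map_diff sum_continuous edges_at_subset)
  have "closedin ?X ?conservation"
    by (intro closedin_Collect_ball closedin_continuous_map_preimage[OF excess_continuous]) auto
  moreover have "closedin ?X ?capacity"
    by (intro closedin_Collect_ball closedin_continuous_map_preimage[OF sum_continuous])
      (auto simp: edges_at_def)
  ultimately have "closedin ?X (?conservation \<inter> ?capacity)"
    by (rule closedin_Int)
  moreover have "compactin ?X ?box"
    by (simp add: compactin_PiE)
  ultimately have "compactin ?X ((?conservation \<inter> ?capacity) \<inter> ?box)"
    by (rule closed_Int_compactin)
  also have "(?conservation \<inter> ?capacity) \<inter> ?box = {\<psi> \<in> ?box. flow \<psi>}"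
    by (auto simp: is_polymatroidal_flow_iff PiE_iff extensional_def)
  finally show ?thesis .
qed

lemma max_flow_exists:
  obtains \<phi> where "flow \<phi>" "\<And>\<psi>. flow \<psi> \<Longrightarrow> flow_value E s \<psi> \<le> flow_value E s \<phi>"
proof -
  let ?X = "product_topology (\<lambda>_. euclideanreal) E"
  let ?flows = "{\<psi> \<in> PiE E (\<lambda>e. {0..f {e}}). flow \<psi>}"
  have "continuous_map ?X euclideanreal (flow_value E s)"
    unfolding flow_value_def[abs_def] out_edges_eq_edges_at in_edges_eq_edges_at
    by (intro continuous_map_diff continuous_map_sum_coordinates edges_at_subset
        finite_edges_subset[OF edges_at_subset])
  then have "compactin euclideanreal (flow_value E s ` ?flows)"
    by (rule image_compactin[OF compactin_bounded_flows])
  then have "compact (flow_value E s ` ?flows)"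
    by simp
  moreover have "restrict (\<lambda>_. 0) E \<in> ?flows"
  proof -
    have "0 \<le> f A" if "A \<subseteq> edges_at E v h" for A v h
      using that edges_at_subset[of E v h] by (intro nonneg) blast
    then have "flow (\<lambda>_. 0)"
      by (simp add: is_polymatroidal_flow_iff excess_def)
    then show ?thesis
      using is_polymatroidal_flow_cong[of E "restrict (\<lambda>_. 0) E" "\<lambda>_. 0"] nonneg by auto
  qed
  ultimately obtain \<phi> where "\<phi> \<in> ?flows"
    and max: "\<And>\<psi>. \<psi> \<in> ?flows \<Longrightarrow> flow_value E s \<psi> \<le> flow_value E s \<phi>"
    using compact_attains_sup[of "flow_value E s ` ?flows"] by blast
  show thesis
  proof (rule that)
    show "flow \<phi>"
      using \<open>\<phi> \<in> ?flows\<close> by simp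
    fix \<psi> assume "flow \<psi>"
    \<comment> \<open>only the values on E matter, and these are bounded by the singleton capacities\<close>
    have "flow (restrict \<psi> E)" and value_eq: "flow_value E s (restrict \<psi> E) = flow_value E s \<psi>"
      using is_polymatroidal_flow_cong[of E "restrict \<psi> E" \<psi>] \<open>flow \<psi>\<close> by simp_all
    moreover have "restrict \<psi> E \<in> PiE E (\<lambda>e. {0..f {e}})"
      unfolding restrict_PiE_iff
      using flow_nonneg[OF \<open>flow \<psi>\<close>] flow_le_singleton_capacity[OF \<open>flow \<psi>\<close>] by simp
    ultimately show "flow_value E s \<psi> \<le> flow_value E s \<phi>"
      using max[of "restrict \<psi> E"] value_eq by simp
  qed
qed

end

section \<open>Tight sets of a flow\<close>

locale polymatroidal_flow = polymatroidal_network V E s t f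
  for V :: "'v set" and E :: "('v \<times> 'v) set" and s t :: 'v and f +
  fixes \<phi> :: "('v \<times> 'v) \<Rightarrow> real"
  assumes flow: "flow \<phi>"
begin

definition tight :: "('v \<times> 'v) set \<Rightarrow> bool" where
  "tight A \<longleftrightarrow> sum \<phi> A = f A"

definition free :: "'v \<Rightarrow> edge_end \<Rightarrow> 'v \<times> 'v \<Rightarrow> bool" where
  "free v h e \<longleftrightarrow> (\<forall>A\<subseteq>edges_at E v h. tight A \<longrightarrow> e \<notin> A)"

definition exchangeable :: "'v \<Rightarrow> edge_end \<Rightarrow> 'v \<times> 'v \<Rightarrow> 'v \<times> 'v \<Rightarrow> bool" where
  "exchangeable v h e e' \<longleftrightarrow> (\<forall>A\<subseteq>edges_at E v h. tight A \<longrightarrow> e \<in> A \<longrightarrow> e' \<in> A)"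

definition tight_closure :: "'v \<Rightarrow> edge_end \<Rightarrow> 'v \<times> 'v \<Rightarrow> ('v \<times> 'v) set" where
  "tight_closure v h e = {x \<in> edges_at E v h. exchangeable v h e x}"

lemma tight_Un_Int:
  assumes "v \<in> V" "A \<subseteq> edges_at E v h" "B \<subseteq> edges_at E v h" "tight A" "tight B"
  shows "tight (A \<union> B) \<and> tight (A \<inter> B)"
proof -
  have "A \<subseteq> E" "B \<subseteq> E"
    using assms(2,3) edges_at_subset[of E v h] by blast+
  then have "f (A \<union> B) + f (A \<inter> B) \<le> f A + f B"
    and "sum \<phi> (A \<union> B) + sum \<phi> (A \<inter> B) = sum \<phi> A + sum \<phi> B"
    by (simp_all add: submod sum.union_inter finite_edges_subset)
  moreover have "A \<union> B \<subseteq> edges_at E v h" "A \<inter> B \<subseteq> edges_at E v h"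
    using assms(2,3) by blast+
  then have "sum \<phi> (A \<union> B) \<le> f (A \<union> B)" "sum \<phi> (A \<inter> B) \<le> f (A \<inter> B)"
    by (simp_all add: flow_capacity[OF flow assms(1)])
  ultimately show ?thesis
    using assms(4,5) unfolding tight_def by linarith
qed

lemma tight_UN:
  assumes "v \<in> V" "finite I" "\<And>i. i \<in> I \<Longrightarrow> A i \<subseteq> edges_at E v h \<and> tight (A i)"
  shows "tight (\<Union>i\<in>I. A i)"
  using assms(2,3)
proof (induction rule: finite_induct)
  case empty
  then show ?case
    by (simp add: tight_def normalized)
next
  case (insert i I)
  then show ?case
    using tight_Un_Int[OF assms(1), of "A i" h "\<Union>i\<in>I. A i"] by auto
qed

lemma tight_Inter:
  assumes "v \<in> V" "finite F" "F \<noteq> {}" "\<And>A. A \<in> F \<Longrightarrow> A \<subseteq> edges_at E v h \<and> tight A"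
  shows "tight (\<Inter>F)"
  using assms(2-4)
proof (induction rule: finite_ne_induct)
  case (insert A F)
  have "\<Inter>F \<subseteq> edges_at E v h"
    using insert.hyps(2) insert.prems by blast
  then show ?case
    using tight_Un_Int[OF assms(1), of A h "\<Inter>F"] insert by simp
qed simp

lemma tight_closure_subset: "tight_closure v h e \<subseteq> edges_at E v h"
  by (simp add: tight_closure_def)

lemma tight_closure_eq_Inter:
  assumes "\<not> free v h e"
  shows "tight_closure v h e = \<Inter>{A. A \<subseteq> edges_at E v h \<and> tight A \<and> e \<in> A}"
  using assms by (auto simp: tight_closure_def exchangeable_def free_def)

lemma tight_closure_tight:
  assumes "v \<in> V" "\<not> free v h e"
  shows "tight (tight_closure v h e)" "e \<in> tight_closure v h e"
proof -
  have "finite {A. A \<subseteq> edges_at E v h \<and> tight A \<and> e \<in> A}"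
    using finite_edges_subset[OF edges_at_subset[of E v h]]
    by (rule rev_finite_subset[OF finite_Pow_iff[THEN iffD2]]) auto
  moreover have "{A. A \<subseteq> edges_at E v h \<and> tight A \<and> e \<in> A} \<noteq> {}"
    using assms(2) by (auto simp: free_def)
  ultimately show "tight (tight_closure v h e)" "e \<in> tight_closure v h e"
    unfolding tight_closure_eq_Inter[OF assms(2)] by (auto intro: tight_Inter[OF assms(1)])
qed

lemma tight_closure_positive:
  assumes "v \<in> V" "\<not> free v h e" "x \<in> tight_closure v h e" "x \<noteq> e"
  shows "0 < \<phi> x"
proof (rule ccontr)
  let ?D = "tight_closure v h e"
  assume "\<not> 0 < \<phi> x"
  moreover have "x \<in> E"
    using assms(3) tight_closure_subset edges_at_subset[of E v h] by blast
  ultimately have "\<phi> x = 0"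
    using flow_nonneg[OF flow \<open>x \<in> E\<close>] by linarith
  have "?D \<subseteq> E"
    using tight_closure_subset[of v h e] edges_at_subset[of E v h] by blast
  \<comment> \<open>removing an edge without flow from a tight set keeps it tight\<close>
  then have "sum \<phi> (?D - {x}) = f ?D"
    using \<open>\<phi> x = 0\<close> tight_closure_tight[OF assms(1,2)] finite_edges_subset
    by (simp add: sum_diff1 tight_def)
  moreover have "f (?D - {x}) \<le> f ?D"
    using \<open>?D \<subseteq> E\<close> by (intro mono) auto
  moreover have "sum \<phi> (?D - {x}) \<le> f (?D - {x})"
    using flow_capacity[OF flow assms(1)] tight_closure_subset by blast
  ultimately have "tight (?D - {x})"
    unfolding tight_def by linarith
  moreover have "?D - {x} \<subseteq> edges_at E v h" "e \<in> ?D - {x}"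
    using tight_closure_subset[of v h e] tight_closure_tight(2)[OF assms(1,2)] assms(4) by auto
  ultimately show False
    using assms(3) by (auto simp: tight_closure_def exchangeable_def)
qed

section \<open>Improving directions\<close>

definition in_tangent_cone :: "'v \<Rightarrow> edge_end \<Rightarrow> (('v \<times> 'v) \<Rightarrow> real) \<Rightarrow> bool" where
  "in_tangent_cone v h d \<longleftrightarrow> (\<forall>A\<subseteq>edges_at E v h. tight A \<longrightarrow> sum d A \<le> 0)"

definition keeps_nonneg :: "(('v \<times> 'v) \<Rightarrow> real) \<Rightarrow> bool" where
  "keeps_nonneg d \<longleftrightarrow> (\<forall>e\<in>E. d e < 0 \<longrightarrow> 0 < \<phi> e)"

lemma in_tangent_cone_add:
  "in_tangent_cone v h d \<Longrightarrow> in_tangent_cone v h d' \<Longrightarrow> in_tangent_cone v h (\<lambda>x. d x + d' x)"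
  unfolding in_tangent_cone_def by (simp add: sum.distrib add_nonpos_nonpos)

lemma in_tangent_cone_cong:
  "(\<And>x. x \<in> edges_at E v h \<Longrightarrow> d x = d' x) \<Longrightarrow> in_tangent_cone v h d \<longleftrightarrow> in_tangent_cone v h d'"
  unfolding in_tangent_cone_def by (metis (no_types, lifting) subset_iff sum.cong)

lemma in_tangent_cone_nonpos: "(\<And>x. d x \<le> 0) \<Longrightarrow> in_tangent_cone v h d"
  unfolding in_tangent_cone_def by (simp add: sum_nonpos)

lemma in_tangent_cone_add_arc_vector_iff:
  assumes "endpoint h e \<noteq> v"
  shows "in_tangent_cone v h (\<lambda>x. d x + arc_vector e h' x) \<longleftrightarrow> in_tangent_cone v h d"
  using assms by (intro in_tangent_cone_cong) (simp add: arc_vector_eq_0)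

lemma in_tangent_cone_free:
  assumes "free v h e"
  shows "in_tangent_cone v h (arc_vector e Head)"
  unfolding in_tangent_cone_def
proof clarify
  fix A assume "A \<subseteq> edges_at E v h" "tight A"
  then have "e \<notin> A" "finite A"
    using assms finite_edges_subset edges_at_subset[of E v h] by (auto simp: free_def)
  then show "sum (arc_vector e Head) A \<le> 0"
    by (simp add: arc_vector_def)
qed

lemma in_tangent_cone_exchange:
  assumes "exchangeable v h e e'"
  shows "in_tangent_cone v h (\<lambda>x. arc_vector e Head x + arc_vector e' Tail x)"
  unfolding in_tangent_cone_def
proof clarify
  fix A assume "A \<subseteq> edges_at E v h" "tight A"
  then have "e \<in> A \<longrightarrow> e' \<in> A" "finite A"
    using assms finite_edges_subset edges_at_subset[of E v h] by (auto simp: exchangeable_def)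
  then show "(\<Sum>x\<in>A. arc_vector e Head x + arc_vector e' Tail x) \<le> 0"
    by (simp add: arc_vector_def sum.distrib)
qed

lemma arc_vector_Tail_nonpos: "arc_vector e Tail x \<le> 0"
  by (simp add: arc_vector_def)

lemma eventually_feasible_step:
  assumes "keeps_nonneg d" "\<And>v h. v \<in> V \<Longrightarrow> in_tangent_cone v h d"
  shows "\<forall>\<^sub>F \<epsilon> in at_right 0. (\<forall>e\<in>E. - \<phi> e + \<epsilon> * - d e \<le> 0) \<and>
    (\<forall>v\<in>V. \<forall>h\<in>UNIV. \<forall>A\<in>Pow (edges_at E v h). sum \<phi> A + \<epsilon> * sum d A \<le> f A)"
proof (intro eventually_conj)
  show "\<forall>\<^sub>F \<epsilon> in at_right 0. \<forall>e\<in>E. - \<phi> e + \<epsilon> * - d e \<le> 0"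
    using assms(1) flow_nonneg[OF flow]
    by (intro eventually_ball_finite finite_edges ballI eventually_step_le)
      (auto simp: keeps_nonneg_def)
  show "\<forall>\<^sub>F \<epsilon> in at_right 0. \<forall>v\<in>V. \<forall>h\<in>UNIV. \<forall>A\<in>Pow (edges_at E v h).
      sum \<phi> A + \<epsilon> * sum d A \<le> f A"
  proof (intro eventually_ball_finite finite_vertices ballI eventually_step_le)
    fix v h A assume "v \<in> V" "A \<in> Pow (edges_at E v h)"
    then show "sum \<phi> A \<le> f A"
      using flow_capacity[OF flow] by blast
    show "sum d A \<le> 0" if "sum \<phi> A = f A"
      using assms(2)[OF \<open>v \<in> V\<close>, of h] \<open>A \<in> Pow (edges_at E v h)\<close> that
      by (auto simp: in_tangent_cone_def tight_def)
  qed (auto simp: UNIV_edge_end finite_edges_subset[OF edges_at_subset])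
qed

lemma improving_direction:
  assumes "keeps_nonneg d" "\<And>v h. v \<in> V \<Longrightarrow> in_tangent_cone v h d"
    and "\<forall>v\<in>V - {s, t}. excess E d v = 0"
  obtains \<epsilon> where "0 < \<epsilon>" "flow (\<lambda>x. \<phi> x + \<epsilon> * d x)"
proof -
  obtain \<epsilon> where \<epsilon>: "0 < \<epsilon>" "\<forall>e\<in>E. - \<phi> e + \<epsilon> * - d e \<le> 0"
    "\<forall>v\<in>V. \<forall>h\<in>UNIV. \<forall>A\<in>Pow (edges_at E v h). sum \<phi> A + \<epsilon> * sum d A \<le> f A"
    using eventually_happens'[OF trivial_limit_at_right_real
        eventually_conj[OF eventually_at_right_less eventually_feasible_step[OF assms(1,2)]]]
    by blast
  have "flow (\<lambda>x. \<phi> x + \<epsilon> * d x)"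
    unfolding is_polymatroidal_flow_iff
  proof (intro conjI ballI allI impI)
    fix e assume "e \<in> E"
    then show "0 \<le> \<phi> e + \<epsilon> * d e"
      using \<epsilon>(2) by auto
  next
    fix v assume "v \<in> V - {s, t}"
    then show "excess E (\<lambda>x. \<phi> x + \<epsilon> * d x) v = 0"
      using flow_conservation[OF flow] assms(3) by (simp add: excess_add_scaled)
  next
    fix v h A assume "v \<in> V" "A \<subseteq> edges_at E v h"
    then show "sum (\<lambda>x. \<phi> x + \<epsilon> * d x) A \<le> f A"
      using \<epsilon>(3) by (simp add: sum.distrib sum_distrib_left)
  qed
  then show thesis
    using that \<epsilon>(1) by blast
qed

section \<open>Augmenting walks\<close>

text \<open>
  A path vector for v sums the arc vectors along an augmenting walk from s to v: it lies in the
  tangent cone at every vertex side and sends one unit from s to v. For a walk ending with the arc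
  (e, h), the contribution of that arc at the side it enters is not yet compensated.
\<close>

definition path_vector :: "'v \<Rightarrow> (('v \<times> 'v) \<Rightarrow> real) \<Rightarrow> bool" where
  "path_vector v d \<longleftrightarrow> keeps_nonneg d \<and> (\<forall>w\<in>V. \<forall>h. in_tangent_cone w h d) \<and>
     (\<forall>w\<in>V. excess E d w = of_bool (w = v) - of_bool (w = s))"

definition arc_path_vector :: "'v \<times> 'v \<Rightarrow> edge_end \<Rightarrow> (('v \<times> 'v) \<Rightarrow> real) \<Rightarrow> bool" where
  "arc_path_vector e h d \<longleftrightarrow> keeps_nonneg d \<and>
     (\<forall>w\<in>V. \<forall>h'. (w, h') \<noteq> (endpoint h e, h) \<longrightarrow> in_tangent_cone w h' d) \<and>
     in_tangent_cone (endpoint h e) h (\<lambda>x. d x - arc_vector e h x) \<and>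
     (\<forall>w\<in>V. excess E d w = of_bool (w = endpoint h e) - of_bool (w = s))"

lemma path_vector_source: "path_vector s (\<lambda>_. 0)"
  by (simp add: path_vector_def keeps_nonneg_def in_tangent_cone_nonpos excess_def)

lemma path_vector_arrive:
  assumes "arc_path_vector e h d" "h = Head \<Longrightarrow> free (snd e) Head e"
  shows "path_vector (endpoint h e) d"
proof -
  have "in_tangent_cone (endpoint h e) h (arc_vector e h)"
    using assms(2) in_tangent_cone_free in_tangent_cone_nonpos[OF arc_vector_Tail_nonpos]
    by (cases h) auto
  then have "in_tangent_cone (endpoint h e) h (\<lambda>x. (d x - arc_vector e h x) + arc_vector e h x)"
    using assms(1) by (intro in_tangent_cone_add) (auto simp: arc_path_vector_def)
  then have "in_tangent_cone w h' d" if "w \<in> V" for w h'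
    using assms(1) that unfolding arc_path_vector_def by (cases "(w, h') = (endpoint h e, h)") auto
  then show ?thesis
    using assms(1) unfolding arc_path_vector_def path_vector_def by blast
qed

lemma arc_path_vector_step:
  assumes "keeps_nonneg d" "e \<in> E" "h = Tail \<Longrightarrow> 0 < \<phi> e"
    and "\<forall>w\<in>V. excess E d w = of_bool (w = endpoint (opposite h) e) - of_bool (w = s)"
    and "in_tangent_cone (endpoint h e) h d"
    and "\<And>w h'. w \<in> V \<Longrightarrow> (w, h') \<noteq> (endpoint h e, h) \<Longrightarrow>
      in_tangent_cone w h' (\<lambda>x. d x + arc_vector e h x)"
  shows "arc_path_vector e h (\<lambda>x. d x + arc_vector e h x)"
  unfolding arc_path_vector_def
proof (intro conjI ballI allI impI)
  show "keeps_nonneg (\<lambda>x. d x + arc_vector e h x)"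
    unfolding keeps_nonneg_def
  proof clarify
    fix x assume "x \<in> E" "d x + arc_vector e h x < 0"
    then have "d x < 0 \<or> (x = e \<and> h = Tail)"
      by (cases h) (auto simp: arc_vector_def split: if_splits)
    then show "0 < \<phi> x"
      using assms(1,3) \<open>x \<in> E\<close> by (auto simp: keeps_nonneg_def)
  qed
  show "in_tangent_cone (endpoint h e) h (\<lambda>x. d x + arc_vector e h x - arc_vector e h x)"
    using assms(5) by simp
  fix w assume "w \<in> V"
  show "excess E (\<lambda>x. d x + arc_vector e h x) w = of_bool (w = endpoint h e) - of_bool (w = s)"
    using assms(4) \<open>w \<in> V\<close> by (simp add: excess_add excess_arc_vector[OF assms(2)])
  show "in_tangent_cone w h' (\<lambda>x. d x + arc_vector e h x)" if "(w, h') \<noteq> (endpoint h e, h)" for h'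
    using assms(6) \<open>w \<in> V\<close> that .
qed

lemma arc_path_vector_leave:
  assumes "path_vector v d" "e \<in> edges_at E v (opposite h)"
    and "h = Head \<Longrightarrow> free v Tail e" "h = Tail \<Longrightarrow> 0 < \<phi> e"
  shows "arc_path_vector e h (\<lambda>x. d x + arc_vector e h x)"
proof (rule arc_path_vector_step)
  have v: "v = endpoint (opposite h) e" and "e \<in> E"
    using assms(2) by (auto simp: edges_at_def)
  show "keeps_nonneg d" "e \<in> E" "h = Tail \<Longrightarrow> 0 < \<phi> e"
    using assms(1,4) \<open>e \<in> E\<close> by (auto simp: path_vector_def)
  show "\<forall>w\<in>V. excess E d w = of_bool (w = endpoint (opposite h) e) - of_bool (w = s)"
    using assms(1) v by (simp add: path_vector_def)
  have cone: "in_tangent_cone w h' d" if "w \<in> V" for w h'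
    using assms(1) that by (simp add: path_vector_def)
  then show "in_tangent_cone (endpoint h e) h d"
    using edge_endpoints[OF \<open>e \<in> E\<close>] .
  fix w h' assume "w \<in> V" "(w, h') \<noteq> (endpoint h e, h)"
  show "in_tangent_cone w h' (\<lambda>x. d x + arc_vector e h x)"
  proof (cases h)
    case Tail
    then show ?thesis
      using cone[OF \<open>w \<in> V\<close>] in_tangent_cone_nonpos[OF arc_vector_Tail_nonpos]
      by (intro in_tangent_cone_add) auto
  next
    case Head
    show ?thesis
    proof (cases "(w, h') = (v, Tail)")
      case True
      then show ?thesis
        using Head cone[OF \<open>w \<in> V\<close>] in_tangent_cone_free[OF assms(3)]
        by (auto intro: in_tangent_cone_add)
    next
      case False
      then have "endpoint h' e \<noteq> w"
        using Head v \<open>(w, h') \<noteq> (endpoint h e, h)\<close> by (cases h') auto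
      then show ?thesis
        using cone[OF \<open>w \<in> V\<close>] by (simp add: in_tangent_cone_add_arc_vector_iff)
    qed
  qed
qed

lemma arc_path_vector_exchange_head:
  assumes "arc_path_vector e Head d" "e' \<in> edges_at E (snd e) Head" "0 < \<phi> e'"
    and "exchangeable (snd e) Head e e'"
  shows "arc_path_vector e' Tail (\<lambda>x. d x + arc_vector e' Tail x)"
proof (rule arc_path_vector_step)
  have "e' \<in> E" "snd e' = snd e"
    using assms(2) by (auto simp: edges_at_def)
  then show "keeps_nonneg d" "e' \<in> E" "Tail = Tail \<Longrightarrow> 0 < \<phi> e'"
    "\<forall>w\<in>V. excess E d w = of_bool (w = endpoint (opposite Tail) e') - of_bool (w = s)"
    using assms(1,3) by (auto simp: arc_path_vector_def)
  have cone: "in_tangent_cone w h' d" if "w \<in> V" "(w, h') \<noteq> (snd e, Head)" for w h'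
    using assms(1) that by (simp add: arc_path_vector_def)
  then show "in_tangent_cone (endpoint Tail e') Tail d"
    using edge_endpoints[OF \<open>e' \<in> E\<close>, of Tail] by simp
  fix w h' assume "w \<in> V" "(w, h') \<noteq> (endpoint Tail e', Tail)"
  show "in_tangent_cone w h' (\<lambda>x. d x + arc_vector e' Tail x)"
  proof (cases "(w, h') = (snd e, Head)")
    case True
    \<comment> \<open>the pending increase of e is paid for by the decrease of e'\<close>
    have "in_tangent_cone (snd e) Head (\<lambda>x. d x - arc_vector e Head x)"
      using assms(1) by (simp add: arc_path_vector_def)
    from in_tangent_cone_add[OF this in_tangent_cone_exchange[OF assms(4)]]
    show ?thesis
      using True by simp
  next
    case False
    then show ?thesis
      using cone[OF \<open>w \<in> V\<close>] in_tangent_cone_nonpos[OF arc_vector_Tail_nonpos]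
      by (intro in_tangent_cone_add) auto
  qed
qed

lemma arc_path_vector_exchange_tail:
  assumes "arc_path_vector e Tail d" "e' \<in> edges_at E (fst e) Tail"
    and "exchangeable (fst e) Tail e' e"
  shows "arc_path_vector e' Head (\<lambda>x. d x + arc_vector e' Head x)"
proof (rule arc_path_vector_step)
  have "e' \<in> E" "fst e' = fst e"
    using assms(2) by (auto simp: edges_at_def)
  then show "keeps_nonneg d" "e' \<in> E" "Head = Tail \<Longrightarrow> 0 < \<phi> e'"
    "\<forall>w\<in>V. excess E d w = of_bool (w = endpoint (opposite Head) e') - of_bool (w = s)"
    using assms(1) by (auto simp: arc_path_vector_def)
  have cone: "in_tangent_cone w h' d" if "w \<in> V" "(w, h') \<noteq> (fst e, Tail)" for w h'
    using assms(1) that by (simp add: arc_path_vector_def)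
  then show "in_tangent_cone (endpoint Head e') Head d"
    using edge_endpoints[OF \<open>e' \<in> E\<close>, of Head] by simp
  fix w h' assume "w \<in> V" "(w, h') \<noteq> (endpoint Head e', Head)"
  show "in_tangent_cone w h' (\<lambda>x. d x + arc_vector e' Head x)"
  proof (cases "(w, h') = (fst e, Tail)")
    case True
    have "in_tangent_cone (fst e) Tail (\<lambda>x. d x - arc_vector e Tail x)"
      using assms(1) by (simp add: arc_path_vector_def)
    from in_tangent_cone_add[OF this in_tangent_cone_exchange[OF assms(3)]]
    show ?thesis
      using True by simp
  next
    case False
    then have "endpoint h' e' \<noteq> w"
      using \<open>fst e' = fst e\<close> \<open>(w, h') \<noteq> (endpoint Head e', Head)\<close> by (cases h') auto
    then show ?thesis
      using cone[OF \<open>w \<in> V\<close> False] by (simp add: in_tangent_cone_add_arc_vector_iff)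
  qed
qed

text \<open>
  reachable_arc e h: an augmenting walk from s can end by raising (h = Head) or lowering
  (h = Tail) the flow on e, arriving at endpoint h e. A vertex is reachable when such a walk can
  stop there, i.e. its last change already respects the polymatroid of the side it enters.
\<close>

inductive reachable :: "'v \<Rightarrow> bool" and reachable_arc :: "'v \<times> 'v \<Rightarrow> edge_end \<Rightarrow> bool" where
  source: "reachable s"
| arrive_head: "reachable_arc e Head \<Longrightarrow> free (snd e) Head e \<Longrightarrow> reachable (snd e)"
| arrive_tail: "reachable_arc e Tail \<Longrightarrow> reachable (fst e)"
| forward: "reachable v \<Longrightarrow> e \<in> edges_at E v Tail \<Longrightarrow> free v Tail e \<Longrightarrow> reachable_arc e Head"
| backward: "reachable v \<Longrightarrow> e \<in> edges_at E v Head \<Longrightarrow> 0 < \<phi> e \<Longrightarrow> reachable_arc e Tail"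
| exchange_head: "reachable_arc e Head \<Longrightarrow> e' \<in> edges_at E (snd e) Head \<Longrightarrow> 0 < \<phi> e' \<Longrightarrow>
    exchangeable (snd e) Head e e' \<Longrightarrow> reachable_arc e' Tail"
| exchange_tail: "reachable_arc e Tail \<Longrightarrow> e' \<in> edges_at E (fst e) Tail \<Longrightarrow>
    exchangeable (fst e) Tail e' e \<Longrightarrow> reachable_arc e' Head"

lemma reachable_path_vector:
  shows "reachable v \<Longrightarrow> \<exists>d. path_vector v d"
    and "reachable_arc e h \<Longrightarrow> \<exists>d. arc_path_vector e h d"
proof (induction rule: reachable_reachable_arc.inducts)
  case source
  then show ?case
    using path_vector_source by blast
next
  case (arrive_head e)
  then show ?case
    using path_vector_arrive[of e Head] by fastforce
next
  case (arrive_tail e)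
  then show ?case
    using path_vector_arrive[of e Tail] by fastforce
next
  case (forward v e)
  then show ?case
    using arc_path_vector_leave[of v _ e Head] by fastforce
next
  case (backward v e)
  then show ?case
    using arc_path_vector_leave[of v _ e Tail] by fastforce
next
  case (exchange_head e e')
  then show ?case
    using arc_path_vector_exchange_head by blast
next
  case (exchange_tail e e')
  then show ?case
    using arc_path_vector_exchange_tail by blast
qed

lemma reachable_sink_improves:
  assumes "reachable t"
  obtains \<psi> where "flow \<psi>" "flow_value E s \<phi> < flow_value E s \<psi>"
proof -
  obtain d where d: "path_vector t d"
    using reachable_path_vector(1)[OF assms] by blast
  then have "keeps_nonneg d" "\<And>v h. v \<in> V \<Longrightarrow> in_tangent_cone v h d"
    "\<forall>v\<in>V - {s, t}. excess E d v = 0" "excess E d s = -1"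
    using source_vertex source_ne_sink by (auto simp: path_vector_def)
  moreover obtain \<epsilon> where "0 < \<epsilon>" "flow (\<lambda>x. \<phi> x + \<epsilon> * d x)"
    using improving_direction calculation(1-3) by blast
  ultimately show thesis
    using that[of "\<lambda>x. \<phi> x + \<epsilon> * d x"] by (simp add: flow_value_add_scaled)
qed

lemma reachable_in_graph:
  shows "reachable v \<Longrightarrow> v \<in> V" and "reachable_arc e h \<Longrightarrow> e \<in> E"
  by (induction rule: reachable_reachable_arc.inducts)
    (auto simp: source_vertex edges_at_def
      dest: edge_endpoints[of _ Head] edge_endpoints[of _ Tail])

lemma reachable_arc_Head_tail: "reachable_arc e Head \<Longrightarrow> reachable (fst e)"
  by (cases rule: reachable_arc.cases) (auto simp: edges_at_def dest: arrive_tail)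

section \<open>The minimum cut\<close>

definition saturated_in :: "'v \<Rightarrow> ('v \<times> 'v) set" where
  "saturated_in b = (\<Union>e\<in>{e \<in> edges_at E b Head. reachable_arc e Head}. tight_closure b Head e)"

definition unsaturated_out :: "'v \<Rightarrow> ('v \<times> 'v) set" where
  "unsaturated_out a = {e \<in> edges_at E a Tail. \<not> reachable (snd e) \<and> e \<notin> saturated_in (snd e)}"

lemma reachable_arc_Head_saturated:
  assumes "reachable_arc e Head" "\<not> reachable (snd e)"
  shows "e \<in> saturated_in (snd e)"
proof -
  have "e \<in> E"
    using reachable_in_graph(2)[OF assms(1)] .
  then have "e \<in> edges_at E (snd e) Head" "snd e \<in> V"
    using edge_endpoints[of e Head] by (simp_all add: edges_at_def)
  moreover have "\<not> free (snd e) Head e"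
    using assms arrive_head[of e] by blast
  ultimately have "e \<in> tight_closure (snd e) Head e"
    by (intro tight_closure_tight(2))
  then show ?thesis
    unfolding saturated_in_def using assms(1) \<open>e \<in> edges_at E (snd e) Head\<close> by blast
qed

lemma saturated_in_tight:
  assumes "b \<in> V" "\<not> reachable b"
  shows "tight (saturated_in b)"
  unfolding saturated_in_def
proof (rule tight_UN[OF assms(1)])
  show "finite {e \<in> edges_at E b Head. reachable_arc e Head}"
    using finite_edges_subset[OF edges_at_subset[of E b Head]] by simp
  fix e assume "e \<in> {e \<in> edges_at E b Head. reachable_arc e Head}"
  then have "\<not> free b Head e"
    using assms(2) arrive_head[of e] by (auto simp: edges_at_def)
  then show "tight_closure b Head e \<subseteq> edges_at E b Head \<and> tight (tight_closure b Head e)"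
    using tight_closure_subset tight_closure_tight(1)[OF assms(1)] by blast
qed

lemma saturated_in_leaving:
  assumes "\<not> reachable b" "x \<in> saturated_in b"
  shows "x \<in> edges_at E b Head" "reachable (fst x)"
proof -
  obtain e where e: "e \<in> edges_at E b Head" "reachable_arc e Head"
    and x: "x \<in> tight_closure b Head e"
    using assms(2) by (auto simp: saturated_in_def)
  have x_in: "x \<in> edges_at E b Head" "exchangeable b Head e x"
    using x by (simp_all add: tight_closure_def)
  then show "x \<in> edges_at E b Head"
    by simp
  show "reachable (fst x)"
  proof (cases "x = e")
    case True
    then show ?thesis
      using e(2) reachable_arc_Head_tail by blast
  next
    case False
    have "b = snd e" "b \<in> V"
      using e edge_endpoints[of e Head] by (auto simp: edges_at_def)
    moreover have "\<not> free b Head e"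
      using assms(1) e arrive_head[of e] by (auto simp: edges_at_def)
    ultimately have "0 < \<phi> x"
      using tight_closure_positive[OF _ _ x False] by blast
    then have "reachable_arc x Tail"
      using exchange_head[OF e(2)] x_in \<open>b = snd e\<close> by blast
    then show ?thesis
      by (rule arrive_tail)
  qed
qed

lemma reachable_arc_Head_from_tight_closure:
  assumes "a \<in> V" "\<not> free a Tail e" "e' \<in> tight_closure a Tail e" "reachable_arc e' Head"
  shows "reachable_arc e Head"
  using assms(4)
proof (cases rule: reachable_arc.cases)
  case (forward v)
  then have "v = a"
    using assms(3) tight_closure_subset[of a Tail e] by (auto simp: edges_at_def)
  moreover have "\<not> free a Tail e'"
    using assms(3) tight_closure_tight[OF assms(1,2)] tight_closure_subset[of a Tail e]
    by (auto simp: free_def)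
  ultimately show ?thesis
    using forward by simp
next
  case (exchange_tail e1)
  have "fst e1 = a"
    using exchange_tail(2) assms(3) tight_closure_subset[of a Tail e] by (auto simp: edges_at_def)
  \<comment> \<open>exchangeability is transitive: increasing e can be paid by e' and e' by e1\<close>
  have "exchangeable a Tail e e1"
    using assms(3) exchange_tail(3) \<open>fst e1 = a\<close> by (auto simp: tight_closure_def exchangeable_def)
  moreover have "e \<in> edges_at E a Tail"
    using tight_closure_tight(2)[OF assms(1,2)] tight_closure_subset by blast
  ultimately show ?thesis
    using reachable_reachable_arc.exchange_tail[OF exchange_tail(1)] \<open>fst e1 = a\<close> by blast
qed

lemma unsaturated_out_not_reachable_arc:
  assumes "e \<in> unsaturated_out a"
  shows "\<not> reachable_arc e Head"
  using assms reachable_arc_Head_saturated[of e] by (auto simp: unsaturated_out_def)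

lemma unsaturated_out_not_free:
  assumes "reachable a" "e \<in> unsaturated_out a"
  shows "\<not> free a Tail e"
  using assms forward[of a e] unsaturated_out_not_reachable_arc[OF assms(2)]
  by (auto simp: unsaturated_out_def)

lemma tight_closure_unsaturated_out_not_reachable_arc:
  assumes "e \<in> unsaturated_out a" "e' \<in> tight_closure a Tail e"
  shows "\<not> reachable_arc e' Tail"
proof
  assume "reachable_arc e' Tail"
  moreover have "e' \<in> edges_at E a Tail" "exchangeable a Tail e e'"
    using assms(2) by (simp_all add: tight_closure_def)
  moreover have "e \<in> edges_at E (fst e') Tail"
    using assms(1) \<open>e' \<in> edges_at E a Tail\<close> by (auto simp: unsaturated_out_def edges_at_def)
  ultimately have "reachable_arc e Head"
    using exchange_tail by (auto simp: edges_at_def)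
  then show False
    using unsaturated_out_not_reachable_arc[OF assms(1)] by blast
qed

lemma tight_closure_subset_unsaturated_out:
  assumes "reachable a" "e \<in> unsaturated_out a"
  shows "tight_closure a Tail e \<subseteq> unsaturated_out a"
proof
  fix e' assume e': "e' \<in> tight_closure a Tail e"
  have "a \<in> V" and nf: "\<not> free a Tail e"
    using reachable_in_graph(1) assms unsaturated_out_not_free by blast+
  have e'_out: "e' \<in> edges_at E a Tail"
    using e' by (simp add: tight_closure_def)
  have not_tail: "\<not> reachable_arc e' Tail"
    using tight_closure_unsaturated_out_not_reachable_arc[OF assms(2) e'] .
  show "e' \<in> unsaturated_out a"
  proof (cases "e' = e")
    case False
    then have "0 < \<phi> e'"
      using tight_closure_positive[OF \<open>a \<in> V\<close> nf e'] by blast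
    then have "\<not> reachable (snd e')"
      using not_tail backward[of "snd e'" e'] e'_out by (auto simp: edges_at_def)
    moreover have "e' \<notin> saturated_in (snd e')"
    proof
      assume "e' \<in> saturated_in (snd e')"
      then obtain e0 where e0: "e0 \<in> edges_at E (snd e') Head" "reachable_arc e0 Head"
        and "e' \<in> tight_closure (snd e') Head e0"
        by (auto simp: saturated_in_def)
      then have "e' \<in> edges_at E (snd e') Head" "exchangeable (snd e') Head e0 e'"
        by (simp_all add: tight_closure_def)
      then have "e' = e0 \<or> reachable_arc e' Tail"
        using exchange_head[OF e0(2)] e0(1) \<open>0 < \<phi> e'\<close> by (auto simp: edges_at_def)
      then show False
        using not_tail e0(2) reachable_arc_Head_from_tight_closure[OF \<open>a \<in> V\<close> nf e']
          unsaturated_out_not_reachable_arc[OF assms(2)] by blast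
    qed
    ultimately show ?thesis
      using e'_out by (simp add: unsaturated_out_def)
  qed (use assms(2) in simp)
qed

lemma unsaturated_out_tight:
  assumes "reachable a"
  shows "tight (unsaturated_out a)"
proof -
  have "a \<in> V"
    using reachable_in_graph(1) assms by blast
  have "unsaturated_out a = (\<Union>e\<in>unsaturated_out a. tight_closure a Tail e)"
    using tight_closure_subset_unsaturated_out[OF assms]
      tight_closure_tight(2)[OF \<open>a \<in> V\<close> unsaturated_out_not_free[OF assms]] by blast
  also have "tight \<dots>"
  proof (rule tight_UN[OF \<open>a \<in> V\<close>])
    show "finite (unsaturated_out a)"
      using finite_edges_subset[OF edges_at_subset[of E a Tail]] by (simp add: unsaturated_out_def)
    fix e assume "e \<in> unsaturated_out a"
    then show "tight_closure a Tail e \<subseteq> edges_at E a Tail \<and> tight (tight_closure a Tail e)"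
      using tight_closure_subset
        tight_closure_tight(1)[OF \<open>a \<in> V\<close> unsaturated_out_not_free[OF assms]] by blast
  qed
  finally show ?thesis .
qed

lemma no_flow_entering_reachable: "e \<in> entering {v. reachable v} \<Longrightarrow> \<phi> e = 0"
proof (rule ccontr)
  assume e: "e \<in> entering {v. reachable v}" and "\<phi> e \<noteq> 0"
  then have "e \<in> E"
    by (simp add: entering_def)
  then have "0 < \<phi> e"
    using flow_nonneg[OF flow] \<open>\<phi> e \<noteq> 0\<close> by (simp add: order_less_le)
  then have "reachable_arc e Tail"
    using e backward[of "snd e" e] by (auto simp: entering_def edges_at_def)
  then show False
    using e arrive_tail by (auto simp: entering_def)
qed

definition cut_assignment :: "'v \<times> 'v \<Rightarrow> 'v" where
  "cut_assignment e = (if e \<in> saturated_in (snd e) then snd e else fst e)"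

lemma cut_assignment_classes:
  "{e \<in> leaving {v. reachable v}. cut_assignment e = v} =
    (if reachable v then unsaturated_out v else saturated_in v)"
proof (cases "reachable v")
  case True
  have "e \<in> leaving {v. reachable v} \<and> cut_assignment e = v \<longleftrightarrow> e \<in> unsaturated_out v" for e
    using True saturated_in_leaving[of "snd e" e]
    by (auto simp: leaving_def unsaturated_out_def edges_at_def cut_assignment_def)
  then show ?thesis
    using True by auto
next
  case False
  have "e \<in> leaving {v. reachable v} \<and> cut_assignment e = v \<longleftrightarrow> e \<in> saturated_in v" for e
    using False saturated_in_leaving[of v e]
    by (auto simp: leaving_def edges_at_def cut_assignment_def)
  then show ?thesis
    using False by auto
qed

theorem cut_of_unreachable_sink:
  assumes "\<not> reachable t"
  shows "f_pf f V (leaving {v. reachable v}) \<le> flow_value E s \<phi>"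
proof -
  let ?S = "{v. reachable v}"
  let ?C = "leaving ?S"
  have "?C \<subseteq> E" and assignment: "edge_assignment ?C cut_assignment"
    by (auto simp: leaving_def edge_assignment_def cut_assignment_def)
  have "f_pf f V ?C \<le> (\<Sum>v\<in>V. f {e \<in> ?C. cut_assignment e = v})"
    using f_pf_le_cost finite_edges_subset[OF \<open>?C \<subseteq> E\<close>] assignment by blast
  also have "\<dots> = (\<Sum>v\<in>V. sum \<phi> {e \<in> ?C. cut_assignment e = v})"
  proof (rule sum.cong)
    fix v assume "v \<in> V"
    then have "tight {e \<in> ?C. cut_assignment e = v}"
      unfolding cut_assignment_classes using unsaturated_out_tight saturated_in_tight by simp
    then show "f {e \<in> ?C. cut_assignment e = v} = sum \<phi> {e \<in> ?C. cut_assignment e = v}"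
      by (simp add: tight_def)
  qed simp
  also have "\<dots> = sum \<phi> ?C"
    by (rule sum_by_assignment[OF \<open>?C \<subseteq> E\<close> assignment, symmetric])
  also have "\<dots> = flow_value E s \<phi>"
  proof -
    have "?S \<subseteq> V"
      using reachable_in_graph(1) by blast
    moreover have "sum \<phi> (entering ?S) = 0"
      using no_flow_entering_reachable by simp
    ultimately show ?thesis
      using flow_value_eq_net_leaving[OF flow_conservation[OF flow], of ?S] assms source by simp
  qed
  finally show ?thesis .
qed

end

theorem lemma6:
  fixes V :: "'v set" and E :: "('v \<times> 'v) set" and s t :: 'v
    and f :: "('v \<times> 'v) set \<Rightarrow> real"
  assumes "finite V" and "E \<subseteq> V \<times> V"
    and "s \<in> V" and "t \<in> V" and "s \<noteq> t"
    and nonneg: "\<And>A. A \<subseteq> E \<Longrightarrow> f A \<ge> 0"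
    and normalized: "f {} = 0"
    and mono: "\<And>A B. A \<subseteq> B \<Longrightarrow> B \<subseteq> E \<Longrightarrow> f A \<le> f B"
    and submod: "\<And>A B. A \<subseteq> E \<Longrightarrow> B \<subseteq> E \<Longrightarrow> f (A \<union> B) + f (A \<inter> B) \<le> f A + f B"
  shows "\<exists>C \<phi>. is_st_cut E s t C \<and> is_polymatroidal_flow V E f s t \<phi> \<and>
           (\<forall>C'. is_st_cut E s t C' \<longrightarrow> f_pf f V C \<le> f_pf f V C') \<and>
           (\<forall>\<psi>. is_polymatroidal_flow V E f s t \<psi> \<longrightarrow> flow_value E s \<psi> \<le> flow_value E s \<phi>) \<and>
           f_pf f V C = flow_value E s \<phi>"
proof -
  interpret polymatroidal_network V E s t f
    by unfold_locales (use assms in auto)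
  obtain \<phi> where \<phi>: "flow \<phi>" and max: "\<And>\<psi>. flow \<psi> \<Longrightarrow> flow_value E s \<psi> \<le> flow_value E s \<phi>"
    using max_flow_exists by blast
  interpret polymatroidal_flow V E s t f \<phi>
    by unfold_locales (rule \<phi>)
  have "\<not> reachable t"
    using reachable_sink_improves max by (metis not_le)
  let ?C = "leaving {v. reachable v}"
  have cut: "is_st_cut E s t ?C"
    using leaving_is_st_cut source \<open>\<not> reachable t\<close> by blast
  have equal: "f_pf f V ?C = flow_value E s \<phi>"
    using cut_of_unreachable_sink[OF \<open>\<not> reachable t\<close>] weak_duality[OF \<phi> cut] by linarith
  have "\<forall>C'. is_st_cut E s t C' \<longrightarrow> f_pf f V ?C \<le> f_pf f V C'"
    using equal weak_duality[OF \<phi>] by simp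
  then show ?thesis
    using cut \<phi> max equal by blast
qed

end
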